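(* For all non-negative integers $p,q,r$ with $p+q\le r$, $\lambda_{\min}(\mathcal{Q}_{p,q,r})\ge-\tau$, where $\tau=\frac{1+\sqrt5}{2}$.
   Context: An edge-signed graph is a finite simple graph each of whose edges is labelled $+$ or $-$; its signed adjacency matrix $M(\mathcal{S})$ has $(u,v)$-entry $1$ for a $(+)$-edge, $-1$ for a $(-)$-edge, $0$ otherwise, and $\lambda_{\min}(\mathcal{S})$ denotes its smallest eigenvalue. For non-negative integers $p,q,r$ with $p+q\le r$, $\mathcal{Q}_{p,q,r}$ is the edge-signed graph defined as follows: its vertex set is a disjoint union $V_p\cup V_q\cup V_r$ with $|V_p|=p$, $|V_q|=q$, $|V_r|=r$; choose disjoint subsets $U_p,U_q\subseteq V_r$ with $|U_p|=p$, $|U_q|=q$ and bijections $\sigma:V_p\to U_p$, $\rho:V_q\to U_q$. The $(+)$-edges are all pairs of distinct vertices of $V_r$ together with the pairs $\{v,\sigma(v)\}$, $v\in V_p$; the $(-)$-edges are the pairs $\{v,\rho(v)\}$, $v\in V_q$; there are no other edges. *)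

theory Defs
  imports Complex_Main "Jordan_Normal_Form.Matrix" "Jordan_Normal_Form.Char_Poly"
begin

text \<open>Edge-signed graphs on vertex set {0..<n}: a sign function
  sgn_edge :: nat => nat => int with values in {-1,0,1}, symmetric, zero on the diagonal
  (0 = no edge, 1 = positive edge, -1 = negative edge).\<close>

definition signed_adj_matrix :: "nat \<Rightarrow> (nat \<Rightarrow> nat \<Rightarrow> int) \<Rightarrow> real mat" where
  "signed_adj_matrix n s = mat n n (\<lambda>(i, j). real_of_int (s i j))"

text \<open>The signed graph Q_{p,q,r}, on vertices {0..<r+p+q}:
  V_r = {0..<r} (a positive clique), U_p = {0..<p}, U_q = {p..<p+q},
  V_p = {r..<r+p} with sigma(r+i) = i, V_q = {r+p..<r+p+q} with rho(r+p+i) = p+i.\<close>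

definition Q_sign :: "nat \<Rightarrow> nat \<Rightarrow> nat \<Rightarrow> nat \<Rightarrow> nat \<Rightarrow> int" where
  "Q_sign p q r u v =
     (if u < r \<and> v < r \<and> u \<noteq> v then 1
      else if (r \<le> u \<and> u < r + p \<and> v = u - r) \<or> (r \<le> v \<and> v < r + p \<and> u = v - r) then 1
      else if (r + p \<le> u \<and> u < r + p + q \<and> v = u - r) \<or> (r + p \<le> v \<and> v < r + p + q \<and> u = v - r) then -1
      else 0)"

definition Q_matrix :: "nat \<Rightarrow> nat \<Rightarrow> nat \<Rightarrow> real mat" where
  "Q_matrix p q r = signed_adj_matrix (p + q + r) (Q_sign p q r)"

end

theory Submission
  imports Defs
begin

(* Let v be an eigenvector of Q_{p,q,r} for an eigenvalue mu < -tau and write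
   w_k for its entries.  Every clique vertex i < r has at most one pendant neighbour r + i,
   joined by an edge of sign eps_i (1 for i < p, -1 for p <= i < p + q, no edge otherwise).
   The eigen-equation at the pendant vertex gives mu w_(r+i) = eps_i w_i, and substituting
   this into the eigen-equation at the clique vertex yields  S = d_i w_i  with
   S = sum of w over the clique and d_i = mu + 1 - eps_i^2 / mu.  Below -tau every d_i is
   negative, so  S^2 = sum_i d_i w_i^2 <= 0  forces S = 0, hence w vanishes on the clique
   and then, through the pendant equations, everywhere -- contradicting v being nonzero. *)

lemma signed_adj_eigen_row:
  assumes ev: "eigenvector (signed_adj_matrix n s) v mu" and k: "k < n"
  shows "(\<Sum>j<n. real_of_int (s k j) * v $ j) = mu * v $ k"
proof -
  have dim: "dim_row (signed_adj_matrix n s) = n"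
    by (simp add: signed_adj_matrix_def)
  from ev have v: "v \<in> carrier_vec n" and eq: "signed_adj_matrix n s *\<^sub>v v = mu \<cdot>\<^sub>v v"
    unfolding eigenvector_def dim by auto
  have "(signed_adj_matrix n s *\<^sub>v v) $ k = (\<Sum>j<n. real_of_int (s k j) * v $ j)"
    using k v by (auto simp: signed_adj_matrix_def scalar_prod_def lessThan_atLeast0
        intro!: sum.cong)
  moreover have "(mu \<cdot>\<^sub>v v) $ k = mu * v $ k"
    using k v by simp
  ultimately show ?thesis
    using eq by simp
qed

definition pendant_sign :: "nat \<Rightarrow> nat \<Rightarrow> nat \<Rightarrow> real" where
  "pendant_sign p q i = (if i < p then 1 else if i < p + q then -1 else 0)"

lemma pendant_sign_square: "(pendant_sign p q i)\<^sup>2 = (if i < p + q then 1 else 0)"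
  by (simp add: pendant_sign_def)

lemma Q_clique_row:
  assumes "p + q \<le> r" "i < r"
  shows "(\<Sum>j<p+q+r. real_of_int (Q_sign p q r i j) * w j) =
           (\<Sum>j<r. w j) - w i + pendant_sign p q i * w (r + i)"
proof -
  have split: "{..<p+q+r} = {..<r} \<union> {r..<p+q+r}" by auto
  have "(\<Sum>j<p+q+r. real_of_int (Q_sign p q r i j) * w j) =
        (\<Sum>j<r. real_of_int (Q_sign p q r i j) * w j)
      + (\<Sum>j\<in>{r..<p+q+r}. real_of_int (Q_sign p q r i j) * w j)"
    unfolding split by (rule sum.union_disjoint) auto
  also have "(\<Sum>j<r. real_of_int (Q_sign p q r i j) * w j) = (\<Sum>j<r. w j - (if j = i then w j else 0))"
    by (rule sum.cong) (use assms in \<open>auto simp: Q_sign_def\<close>)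
  also have "\<dots> = (\<Sum>j<r. w j) - w i"
    using assms by (simp add: sum_subtractf)
  also have "(\<Sum>j\<in>{r..<p+q+r}. real_of_int (Q_sign p q r i j) * w j) =
             (\<Sum>j\<in>{r..<p+q+r}. if j = r + i then pendant_sign p q i * w (r + i) else 0)"
    by (rule sum.cong) (use assms in \<open>auto simp: Q_sign_def pendant_sign_def\<close>)
  also have "\<dots> = pendant_sign p q i * w (r + i)"
    using assms by (subst sum.delta) (auto simp: pendant_sign_def)
  finally show ?thesis .
qed

lemma Q_pendant_row:
  assumes "p + q \<le> r" "i < p + q"
  shows "(\<Sum>j<p+q+r. real_of_int (Q_sign p q r (r + i) j) * w j) = pendant_sign p q i * w i"
proof -
  have "(\<Sum>j<p+q+r. real_of_int (Q_sign p q r (r + i) j) * w j) =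
        (\<Sum>j<p+q+r. if j = i then pendant_sign p q i * w i else 0)"
    by (rule sum.cong) (use assms in \<open>auto simp: Q_sign_def pendant_sign_def\<close>)
  also have "\<dots> = pendant_sign p q i * w i"
    using assms by (subst sum.delta) auto
  finally show ?thesis .
qed

lemma below_minus_golden_ratio:
  fixes mu :: real
  assumes "mu < - ((1 + sqrt 5) / 2)"
  shows "mu + 1 < 0" and "mu + 1 - 1 / mu < 0"
proof -
  have sqrt5: "sqrt 5 > 1" "sqrt 5 * sqrt 5 = 5"
    by (simp_all add: real_less_rsqrt)
  have "2 * mu + sqrt 5 < -1"
    using assms by (simp add: field_simps)
  then show neg: "mu + 1 < 0"
    using sqrt5 by linarith
  have "mu * mu + mu - 1 = (mu + (1 + sqrt 5) / 2) * (mu + (1 - sqrt 5) / 2)"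
    using sqrt5 by (simp add: field_simps)
  also have "\<dots> > 0"
  proof (rule mult_neg_neg)
    have "2 * mu + 1 < sqrt 5"
      using \<open>2 * mu + sqrt 5 < -1\<close> sqrt5(1) by linarith
    then show "mu + (1 + sqrt 5) / 2 < 0" "mu + (1 - sqrt 5) / 2 < 0"
      using \<open>2 * mu + sqrt 5 < -1\<close> by (simp_all add: field_simps)
  qed
  finally have "mu * mu + mu - 1 > 0" .
  moreover have "mu + 1 - 1 / mu = (mu * mu + mu - 1) / mu"
    using neg by (simp add: field_simps)
  ultimately show "mu + 1 - 1 / mu < 0"
    using neg by (simp add: divide_pos_neg)
qed

(* If the total S of some reals equals d_i times each of them with all d_i negative,
   then S^2 = sum d_i w_i^2 <= 0, so S = 0 and with it every w_i. *)
lemma sum_eq_negative_multiples_imp_zero: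
  fixes w d :: "nat \<Rightarrow> real"
  assumes S: "\<And>i. i \<in> A \<Longrightarrow> (\<Sum>j\<in>A. w j) = d i * w i"
    and d: "\<And>i. i \<in> A \<Longrightarrow> d i < 0"
    and "i \<in> A"
  shows "w i = 0"
proof -
  let ?S = "\<Sum>j\<in>A. w j"
  have "?S * ?S = (\<Sum>j\<in>A. ?S * w j)"
    by (simp add: sum_distrib_left)
  also have "\<dots> = (\<Sum>j\<in>A. d j * (w j * w j))"
    by (rule sum.cong) (simp_all add: S)
  also have "\<dots> \<le> 0"
    by (rule sum_nonpos) (simp add: d mult_nonpos_nonneg less_imp_le)
  finally have "?S = 0"
    by (metis not_real_square_gt_zero linorder_not_le)
  then show ?thesis
    using S[OF \<open>i \<in> A\<close>] d[OF \<open>i \<in> A\<close>] by simp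
qed

lemma Q_eigenvector_clique_zero:
  assumes pqr: "p + q \<le> r"
    and ev: "eigenvector (Q_matrix p q r) v mu"
    and mu: "mu < - ((1 + sqrt 5) / 2)"
    and pendant: "\<And>i. i < p + q \<Longrightarrow> pendant_sign p q i * v $ i = mu * v $ (r + i)"
    and i: "i < r"
  shows "v $ i = 0"
proof -
  have mu1: "mu + 1 < 0" and d_neg: "mu + 1 - 1 / mu < 0"
    using below_minus_golden_ratio[OF mu] by auto
  define d where "d i = mu + 1 - (pendant_sign p q i)\<^sup>2 / mu" for i
  have "(\<Sum>j\<in>{..<r}. v $ j) = d i * v $ i" if "i \<in> {..<r}" for i
  proof -
    have pendant_term: "pendant_sign p q i * v $ (r + i) = (pendant_sign p q i)\<^sup>2 / mu * v $ i"
    proof (cases "i < p + q")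
      case True
      then show ?thesis
        using pendant[OF True] mu1 by (simp add: field_simps power2_eq_square)
    qed (simp add: pendant_sign_def)
    have "(\<Sum>j<r. v $ j) - v $ i + pendant_sign p q i * v $ (r + i) = mu * v $ i"
      using Q_clique_row[OF pqr, of i "\<lambda>j. v $ j"] signed_adj_eigen_row[of _ _ v mu i] ev that pqr
      by (simp add: Q_matrix_def)
    then show ?thesis
      unfolding pendant_term d_def by (simp add: algebra_simps)
  qed
  moreover have "d i < 0" for i
    using mu1 d_neg by (simp add: d_def pendant_sign_square)
  ultimately show ?thesis
    using sum_eq_negative_multiples_imp_zero[of "{..<r}" "\<lambda>j. v $ j" d i] i by blast
qed

theorem mainTheorem5:
  fixes p q r :: nat
  assumes "p + q \<le> r"
  shows "\<forall>mu. eigenvalue (Q_matrix p q r) mu \<longrightarrow> mu \<ge> - ((1 + sqrt 5) / 2)"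
proof (intro allI impI, rule ccontr)
  fix mu assume "eigenvalue (Q_matrix p q r) mu" and "\<not> mu \<ge> - ((1 + sqrt 5) / 2)"
  then obtain v where ev: "eigenvector (Q_matrix p q r) v mu"
    and mu: "mu < - ((1 + sqrt 5) / 2)"
    unfolding eigenvalue_def by auto
  have mu0: "mu \<noteq> 0"
    using below_minus_golden_ratio(1)[OF mu] by simp
  have pendant: "pendant_sign p q i * v $ i = mu * v $ (r + i)" if "i < p + q" for i
    using Q_pendant_row[OF assms that, of "\<lambda>j. v $ j"] signed_adj_eigen_row[of _ _ v mu "r + i"]
      ev that by (simp add: Q_matrix_def)
  have clique: "v $ i = 0" if "i < r" for i
    using Q_eigenvector_clique_zero[OF assms ev mu pendant that] by blast
  have "v $ k = 0" if "k < p + q + r" for k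
  proof (cases "k < r")
    case False
    then have "mu * v $ (r + (k - r)) = 0"
      using pendant[of "k - r"] clique[of "k - r"] that assms by simp
    then show ?thesis using False mu0 by simp
  qed (rule clique)
  moreover have "v \<in> carrier_vec (p + q + r)" "v \<noteq> 0\<^sub>v (p + q + r)"
    using ev by (auto simp: eigenvector_def Q_matrix_def signed_adj_matrix_def)
  ultimately show False
    by (metis eq_vecI carrier_vecD index_zero_vec)
qed

end
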